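(* Let $\varepsilon\ge0$ and let $u\in H^2(-1,1)$ be even and positive on $[-1,1]$ with $u'(\pm1)=0$. Then $\mathscr H_\varepsilon(u)\ge4\pi\sqrt\varepsilon$ and $$\mathscr W(u)\le\frac12\Bigl(\mathscr H_\varepsilon(u)+\sqrt{\mathscr H_\varepsilon(u)^2-16\pi^2\varepsilon}\Bigr).$$
   Context: $\mathscr A(u)=2\pi\int_{-1}^1u\sqrt{1+u'^2}\,dx$, $\mathscr W(u)=\frac\pi2\int_{-1}^1(\frac{1}{u\sqrt{1+u'^2}}-\frac{u''}{(1+u'^2)^{3/2}})^2u\sqrt{1+u'^2}\,dx$, $\mathscr H_\varepsilon=\mathscr W+\varepsilon\mathscr A$. *)

theory Defs
  imports "HOL-Analysis.Analysis"
begin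

text \<open>Membership of u in H^2(-1,1), via its continuous representative:
  u and u' are absolutely continuous on [-1,1], u' is the (classical) derivative of u,
  and u'' (the weak second derivative) lies in L^2(-1,1) (hence also L^1).
  u' and u'' are the derivatives used in the functionals.\<close>
definition H2_rep :: "(real \<Rightarrow> real) \<Rightarrow> (real \<Rightarrow> real) \<Rightarrow> (real \<Rightarrow> real) \<Rightarrow> bool" where
  "H2_rep u u' u'' \<longleftrightarrow>
     u'' absolutely_integrable_on {-1..1} \<and>
     (\<lambda>x. (u'' x)\<^sup>2) integrable_on {-1..1} \<and>
     (\<forall>x\<in>{-1..1}. u x = u (-1) + integral {-1..x} u' \<and>
                    u' x = u' (-1) + integral {-1..x} u'')"

definition area :: "(real \<Rightarrow> real) \<Rightarrow> (real \<Rightarrow> real) \<Rightarrow> real" where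
  "area u u' = 2 * pi * integral {-1..1} (\<lambda>x. u x * sqrt (1 + (u' x)\<^sup>2))"

definition willmore :: "(real \<Rightarrow> real) \<Rightarrow> (real \<Rightarrow> real) \<Rightarrow> (real \<Rightarrow> real) \<Rightarrow> real" where
  "willmore u u' u'' = pi / 2 * integral {-1..1}
     (\<lambda>x. (1 / (u x * sqrt (1 + (u' x)\<^sup>2)) - u'' x / (sqrt (1 + (u' x)\<^sup>2)) ^ 3)\<^sup>2
           * u x * sqrt (1 + (u' x)\<^sup>2))"

definition helfrich :: "real \<Rightarrow> (real \<Rightarrow> real) \<Rightarrow> (real \<Rightarrow> real) \<Rightarrow> (real \<Rightarrow> real) \<Rightarrow> real" where
  "helfrich \<epsilon> u u' u'' = willmore u u' u'' + \<epsilon> * area u u'"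

end

(* The profile u generates a surface of revolution with area density w = u s, where
   s = sqrt (1 + u'^2), and sum of principal curvatures kappa = 1/(u s) - u''/s^3; thus
   W = pi/2 * int kappa^2 w and A = 2 pi * int w. One computes kappa w = 1 - u u''/(1 + u'^2), and
   u''/(1 + u'^2) = (arctan u')', so integrating by parts and using u'(-1) = u'(1) = 0 gives
   int u u''/(1 + u'^2) = - int u' arctan u' <= 0, hence int kappa w >= 2. The Cauchy-Schwarz
   inequality with weight w yields 4 <= int kappa^2 w * int w, that is W A >= 4 pi^2, and both
   claims follow from this product bound by elementary algebra.

   Since u' is only absolutely continuous, the chain rule and integration by parts are proved for
   indefinite integrals directly, from local error estimates assembled by bisection. *)

theory Submission
  imports Defs
begin

lemma real_MVT_between:
  fixes \<Phi> \<phi> :: "real \<Rightarrow> real"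
  assumes "\<And>t. (\<Phi> has_real_derivative \<phi> t) (at t)"
  shows "\<exists>\<xi>. min p q \<le> \<xi> \<and> \<xi> \<le> max p q \<and> \<Phi> q - \<Phi> p = \<phi> \<xi> * (q - p)"
proof -
  consider "p < q" | "p = q" | "q < p" by linarith
  then show ?thesis
  proof cases
    case 1
    then obtain \<xi> where "p < \<xi>" "\<xi> < q" "\<Phi> q - \<Phi> p = (q - p) * \<phi> \<xi>"
      using MVT2[of p q \<Phi> \<phi>] assms by blast
    then show ?thesis by (intro exI[of _ \<xi>]) (auto simp: algebra_simps)
  next
    case 3
    then obtain \<xi> where "q < \<xi>" "\<xi> < p" "\<Phi> p - \<Phi> q = (p - q) * \<phi> \<xi>"
      using MVT2[of q p \<Phi> \<phi>] assms by blast
    then show ?thesis by (intro exI[of _ \<xi>]) (auto simp: algebra_simps)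
  qed auto
qed

lemma absolutely_integrable_continuous_mult:
  fixes c f :: "real \<Rightarrow> real"
  assumes "continuous_on {a..b} c" "f absolutely_integrable_on {a..b}"
  shows "(\<lambda>x. c x * f x) absolutely_integrable_on {a..b}"
proof (rule absolutely_integrable_bounded_measurable_product_real)
  show "c \<in> borel_measurable (lebesgue_on {a..b})"
    by (rule continuous_imp_measurable_on_sets_lebesgue[OF assms(1)]) auto
  show "bounded (c ` {a..b})"
    by (intro compact_imp_bounded compact_continuous_image assms) auto
qed (use assms in auto)

lemma continuous_on_real_closeE:
  fixes U :: "real \<Rightarrow> real"
  assumes "continuous_on S U" "z \<in> S" "0 < e"
  obtains d where "0 < d" "\<And>t. t \<in> S \<Longrightarrow> \<bar>t - z\<bar> < d \<Longrightarrow> \<bar>U t - U z\<bar> < e"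
  using continuous_on_iff[THEN iffD1, OF assms(1), rule_format, OF assms(2,3)]
  by (auto simp: dist_real_def)

lemma integral_mult_deviation_le:
  fixes c f :: "real \<Rightarrow> real"
  assumes cf: "(\<lambda>t. c t * f t) integrable_on S" and f: "f absolutely_integrable_on S"
    and dev: "\<And>t. t \<in> S \<Longrightarrow> \<bar>c t - c\<^sub>0\<bar> \<le> e"
  shows "\<bar>integral S (\<lambda>t. c t * f t) - c\<^sub>0 * integral S f\<bar> \<le> e * integral S (\<lambda>t. \<bar>f t\<bar>)"
proof -
  have fi: "f integrable_on S" and fa: "(\<lambda>t. \<bar>f t\<bar>) integrable_on S"
    using f by (auto simp: absolutely_integrable_on_def)
  have "integral S (\<lambda>t. c t * f t) - c\<^sub>0 * integral S f = integral S (\<lambda>t. (c t - c\<^sub>0) * f t)"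
    using integral_diff[OF cf integrable_on_cmult_left[OF fi, of c\<^sub>0]]
    by (simp add: left_diff_distrib)
  also have "\<bar>\<dots>\<bar> \<le> integral S (\<lambda>t. e * \<bar>f t\<bar>)"
  proof -
    have "(\<lambda>t. (c t - c\<^sub>0) * f t) integrable_on S"
      using integrable_diff[OF cf integrable_on_cmult_left[OF fi, of c\<^sub>0]]
      by (simp add: left_diff_distrib)
    moreover have "\<bar>(c t - c\<^sub>0) * f t\<bar> \<le> e * \<bar>f t\<bar>" if "t \<in> S" for t
      unfolding abs_mult using dev[OF that] by (rule mult_right_mono) simp
    ultimately show ?thesis
      using integral_norm_bound_integral[of "\<lambda>t. (c t - c\<^sub>0) * f t" S "\<lambda>t. e * \<bar>f t\<bar>"]
        integrable_on_cmult_left[OF fa] by simp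
  qed
  finally show ?thesis by simp
qed

lemma integral_eq_of_local_estimate:
  fixes F h k :: "real \<Rightarrow> real"
  assumes "a \<le> b" and h: "h integrable_on {a..b}" and k: "k integrable_on {a..b}"
    and local_estimate: "\<And>e z. 0 < e \<Longrightarrow> z \<in> {a..b} \<Longrightarrow> \<exists>d>0. \<forall>x y.
      a \<le> x \<and> x \<le> z \<and> z \<le> y \<and> y \<le> b \<and> y - x < d \<longrightarrow>
      \<bar>F y - F x - integral {x..y} h\<bar> \<le> e * integral {x..y} k"
  shows "integral {a..b} h = F b - F a"
proof -
  have estimate: "\<bar>F b - F a - integral {a..b} h\<bar> \<le> e * integral {a..b} k" if "0 < e" for e
  proof -
    define P where "P x y \<longleftrightarrow> a \<le> x \<longrightarrow> y \<le> b \<longrightarrow>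
      \<bar>F y - F x - integral {x..y} h\<bar> \<le> e * integral {x..y} k" for x y
    have "P a b"
      using \<open>a \<le> b\<close>
    proof (induction rule: Bolzano)
      case (trans x y z)
      show ?case
        unfolding P_def
      proof (intro impI)
        assume "a \<le> x" "z \<le> b"
        with trans have sub: "{x..z} \<subseteq> {a..b}" by auto
        have "integral {x..y} h + integral {y..z} h = integral {x..z} h"
          "integral {x..y} k + integral {y..z} k = integral {x..z} k"
          using trans(3,4) integrable_on_subinterval[OF h sub] integrable_on_subinterval[OF k sub]
          by (auto intro: Henstock_Kurzweil_Integration.integral_combine)
        with trans \<open>a \<le> x\<close> \<open>z \<le> b\<close> show "\<bar>F z - F x - integral {x..z} h\<bar> \<le> e * integral {x..z} k"
          unfolding P_def by (smt (verit) distrib_left)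
      qed
    next
      case (local z)
      then show ?case using local_estimate[OF \<open>0 < e\<close>, of z] by (auto simp: P_def)
    qed
    then show ?thesis by (simp add: P_def)
  qed
  have "\<bar>F b - F a - integral {a..b} h\<bar> \<le> 0 + e" if "0 < e" for e
  proof -
    let ?K = "\<bar>integral {a..b} k\<bar> + 1"
    have "e / ?K * integral {a..b} k \<le> e / ?K * ?K"
      using \<open>0 < e\<close> by (intro mult_left_mono) auto
    then have "e / ?K * integral {a..b} k \<le> e"
      by simp
    then show ?thesis using estimate[of "e / ?K"] \<open>0 < e\<close> by simp
  qed
  then have "\<bar>F b - F a - integral {a..b} h\<bar> \<le> 0"
    by (rule field_le_epsilon)
  then show ?thesis by simp
qed

(* F is absolutely continuous on [a, b], with derivative f almost everywhere. *)
definition primitive_on :: "real \<Rightarrow> real \<Rightarrow> (real \<Rightarrow> real) \<Rightarrow> (real \<Rightarrow> real) \<Rightarrow> bool" where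
  "primitive_on a b f F \<longleftrightarrow>
     f absolutely_integrable_on {a..b} \<and> (\<forall>x\<in>{a..b}. F x = F a + integral {a..x} f)"

lemma primitive_onD:
  assumes "primitive_on a b f F"
  shows "f absolutely_integrable_on {a..b}" "f integrable_on {a..b}"
    and "x \<in> {a..b} \<Longrightarrow> F x = F a + integral {a..x} f"
  using assms unfolding primitive_on_def absolutely_integrable_on_def by blast+

lemma primitive_on_diff:
  assumes F: "primitive_on a b f F" and "a \<le> x" "x \<le> y" "y \<le> b"
  shows "F y - F x = integral {x..y} f"
proof -
  have "f integrable_on {a..y}"
    by (rule integrable_on_subinterval[OF primitive_onD(2)[OF F]]) (use assms in auto)
  from Henstock_Kurzweil_Integration.integral_combine[OF assms(2,3) this]
  have "integral {a..x} f + integral {x..y} f = integral {a..y} f" .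
  moreover have "F x = F a + integral {a..x} f" "F y = F a + integral {a..y} f"
    using assms by (auto intro: primitive_onD(3)[OF F])
  ultimately show ?thesis by simp
qed

lemma primitive_on_continuous:
  assumes F: "primitive_on a b f F"
  shows "continuous_on {a..b} F"
proof -
  have "continuous_on {a..b} (\<lambda>x. F a + integral {a..x} f)"
    by (intro continuous_intros indefinite_integral_continuous_1 primitive_onD(2)[OF F])
  moreover have "F a + integral {a..x} f = F x" if "x \<in> {a..b}" for x
    using primitive_onD(3)[OF F that] by simp
  ultimately show ?thesis by (rule continuous_on_eq)
qed

lemma primitive_on_subinterval:
  assumes F: "primitive_on a b f F" and "c \<le> b"
  shows "primitive_on a c f F"
  unfolding primitive_on_def
proof
  show "f absolutely_integrable_on {a..c}"
    by (rule absolutely_integrable_on_subinterval[OF primitive_onD(1)[OF F]]) (use assms in auto)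
  show "\<forall>x\<in>{a..c}. F x = F a + integral {a..x} f"
  proof
    fix x assume "x \<in> {a..c}"
    with \<open>c \<le> b\<close> have "x \<in> {a..b}" by simp
    then show "F x = F a + integral {a..x} f" by (rule primitive_onD(3)[OF F])
  qed
qed

lemma integral_comp_primitive_on_estimate:
  fixes \<Phi> \<phi> :: "real \<Rightarrow> real"
  assumes v: "primitive_on a b f v" and \<Phi>: "\<And>t. (\<Phi> has_real_derivative \<phi> t) (at t)"
    and "a \<le> x" "x \<le> y" "y \<le> b" and \<phi>vf: "(\<lambda>t. \<phi> (v t) * f t) integrable_on {x..y}"
    and dev: "\<And>t \<xi>. t \<in> {x..y} \<Longrightarrow> min (v x) (v y) \<le> \<xi> \<Longrightarrow> \<xi> \<le> max (v x) (v y) \<Longrightarrow>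
      \<bar>\<phi> (v t) - \<phi> \<xi>\<bar> \<le> e"
  shows "\<bar>\<Phi> (v y) - \<Phi> (v x) - integral {x..y} (\<lambda>t. \<phi> (v t) * f t)\<bar>
    \<le> e * integral {x..y} (\<lambda>t. \<bar>f t\<bar>)"
proof -
  obtain \<xi> where \<xi>: "min (v x) (v y) \<le> \<xi>" "\<xi> \<le> max (v x) (v y)"
    and mvt: "\<Phi> (v y) - \<Phi> (v x) = \<phi> \<xi> * (v y - v x)"
    using real_MVT_between[OF \<Phi>] by blast
  have "f absolutely_integrable_on {x..y}"
    by (rule absolutely_integrable_on_subinterval[OF primitive_onD(1)[OF v]]) (use assms in auto)
  with \<phi>vf have "\<bar>integral {x..y} (\<lambda>t. \<phi> (v t) * f t) - \<phi> \<xi> * integral {x..y} f\<bar>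
      \<le> e * integral {x..y} (\<lambda>t. \<bar>f t\<bar>)"
    by (rule integral_mult_deviation_le) (use dev \<xi> in auto)
  moreover have "v y - v x = integral {x..y} f"
    using v assms by (intro primitive_on_diff) auto
  ultimately show ?thesis using mvt by (simp add: abs_minus_commute)
qed

lemma integral_comp_primitive_on:
  fixes \<Phi> \<phi> :: "real \<Rightarrow> real"
  assumes "a \<le> b" and v: "primitive_on a b f v"
    and \<Phi>: "\<And>t. (\<Phi> has_real_derivative \<phi> t) (at t)" and \<phi>: "continuous_on UNIV \<phi>"
  shows "integral {a..b} (\<lambda>x. \<phi> (v x) * f x) = \<Phi> (v b) - \<Phi> (v a)"
proof (rule integral_eq_of_local_estimate[where k = "\<lambda>x. \<bar>f x\<bar>"])
  have f: "f absolutely_integrable_on {a..b}" using v by (rule primitive_onD)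
  have vc: "continuous_on {a..b} v" using v by (rule primitive_on_continuous)
  have "continuous_on {a..b} (\<lambda>x. \<phi> (v x))"
    using continuous_on_compose2[OF \<phi> vc] by simp
  then have \<phi>vf: "(\<lambda>x. \<phi> (v x) * f x) integrable_on {a..b}"
    using absolutely_integrable_continuous_mult[OF _ f] by (simp add: absolutely_integrable_on_def)
  then show "(\<lambda>x. \<phi> (v x) * f x) integrable_on {a..b}" .
  show "(\<lambda>x. \<bar>f x\<bar>) integrable_on {a..b}"
    using f by (simp add: absolutely_integrable_on_def)
  fix e z :: real assume "0 < e" "z \<in> {a..b}"
  obtain \<delta> where "0 < \<delta>" and \<delta>: "\<And>p. \<bar>p - v z\<bar> < \<delta> \<Longrightarrow> \<bar>\<phi> p - \<phi> (v z)\<bar> < e / 2"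
    using continuous_on_real_closeE[OF \<phi> UNIV_I, of "e / 2"] \<open>0 < e\<close> by auto
  obtain d where "0 < d" and d: "\<And>t. t \<in> {a..b} \<Longrightarrow> \<bar>t - z\<bar> < d \<Longrightarrow> \<bar>v t - v z\<bar> < \<delta>"
    using continuous_on_real_closeE[OF vc \<open>z \<in> {a..b}\<close> \<open>0 < \<delta>\<close>] by blast
  have "\<bar>\<Phi> (v y) - \<Phi> (v x) - integral {x..y} (\<lambda>t. \<phi> (v t) * f t)\<bar> \<le> e * integral {x..y} (\<lambda>t. \<bar>f t\<bar>)"
    if "a \<le> x" "x \<le> z" "z \<le> y" "y \<le> b" "y - x < d" for x y
  proof (rule integral_comp_primitive_on_estimate[OF v \<Phi>])
    have near: "\<bar>v t - v z\<bar> < \<delta>" if "t \<in> {x..y}" for t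
      using d[of t] that \<open>a \<le> x\<close> \<open>x \<le> z\<close> \<open>z \<le> y\<close> \<open>y \<le> b\<close> \<open>y - x < d\<close> by auto
    show "\<bar>\<phi> (v t) - \<phi> \<xi>\<bar> \<le> e"
      if "t \<in> {x..y}" "min (v x) (v y) \<le> \<xi>" "\<xi> \<le> max (v x) (v y)" for t \<xi>
    proof -
      have "\<bar>\<xi> - v z\<bar> < \<delta>" using that near[of x] near[of y] \<open>x \<le> z\<close> \<open>z \<le> y\<close> by auto
      then show ?thesis using \<delta>[of "v t"] \<delta>[of \<xi>] near[OF that(1)] by linarith
    qed
    show "(\<lambda>t. \<phi> (v t) * f t) integrable_on {x..y}"
      by (rule integrable_on_subinterval[OF \<phi>vf]) (use that in auto)
  qed (use that in auto)
  with \<open>0 < d\<close> show "\<exists>d>0. \<forall>x y. a \<le> x \<and> x \<le> z \<and> z \<le> y \<and> y \<le> b \<and> y - x < d \<longrightarrow>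
      \<bar>\<Phi> (v y) - \<Phi> (v x) - integral {x..y} (\<lambda>t. \<phi> (v t) * f t)\<bar>
        \<le> e * integral {x..y} (\<lambda>t. \<bar>f t\<bar>)"
    by blast
qed (fact)

lemma primitive_on_comp:
  fixes \<Phi> \<phi> :: "real \<Rightarrow> real"
  assumes v: "primitive_on a b f v"
    and \<Phi>: "\<And>t. (\<Phi> has_real_derivative \<phi> t) (at t)" and \<phi>: "continuous_on UNIV \<phi>"
  shows "primitive_on a b (\<lambda>x. \<phi> (v x) * f x) (\<lambda>x. \<Phi> (v x))"
  unfolding primitive_on_def
proof
  have "continuous_on {a..b} (\<lambda>x. \<phi> (v x))"
    using continuous_on_compose2[OF \<phi> primitive_on_continuous[OF v]] by simp
  then show "(\<lambda>x. \<phi> (v x) * f x) absolutely_integrable_on {a..b}"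
    using primitive_onD(1)[OF v] by (rule absolutely_integrable_continuous_mult)
  show "\<forall>x\<in>{a..b}. \<Phi> (v x) = \<Phi> (v a) + integral {a..x} (\<lambda>x. \<phi> (v x) * f x)"
  proof
    fix x assume "x \<in> {a..b}"
    then have "primitive_on a x f v" using primitive_on_subinterval[OF v] by simp
    with \<open>x \<in> {a..b}\<close> show "\<Phi> (v x) = \<Phi> (v a) + integral {a..x} (\<lambda>x. \<phi> (v x) * f x)"
      using integral_comp_primitive_on[OF _ _ \<Phi> \<phi>] by simp
  qed
qed

lemma integration_by_parts_estimate:
  fixes p q U V :: "real \<Rightarrow> real"
  assumes U: "primitive_on a b p U" and V: "primitive_on a b q V" and "a \<le> x" "x \<le> y" "y \<le> b"
    and devU: "\<And>t. t \<in> {x..y} \<Longrightarrow> \<bar>U t - U x\<bar> \<le> e"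
    and devV: "\<And>t. t \<in> {x..y} \<Longrightarrow> \<bar>V t - V y\<bar> \<le> e"
  shows "\<bar>U y * V y - U x * V x - integral {x..y} (\<lambda>t. U t * q t + V t * p t)\<bar>
    \<le> e * integral {x..y} (\<lambda>t. \<bar>p t\<bar> + \<bar>q t\<bar>)"
proof -
  have sub: "{x..y} \<subseteq> {a..b}" using assms by auto
  have p: "p absolutely_integrable_on {x..y}" and q: "q absolutely_integrable_on {x..y}"
    using primitive_onD(1)[OF U] primitive_onD(1)[OF V] sub
    by (auto intro: absolutely_integrable_on_subinterval)
  have "continuous_on {x..y} U" "continuous_on {x..y} V"
    using primitive_on_continuous[OF U] primitive_on_continuous[OF V] sub
    by (auto intro: continuous_on_subset)
  then have Uq: "(\<lambda>t. U t * q t) integrable_on {x..y}" and Vp: "(\<lambda>t. V t * p t) integrable_on {x..y}"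
    using p q absolutely_integrable_continuous_mult by (auto simp: absolutely_integrable_on_def)
  have "\<bar>integral {x..y} (\<lambda>t. U t * q t) - U x * integral {x..y} q\<bar> \<le> e * integral {x..y} (\<lambda>t. \<bar>q t\<bar>)"
    using Uq q devU by (rule integral_mult_deviation_le)
  moreover have "\<bar>integral {x..y} (\<lambda>t. V t * p t) - V y * integral {x..y} p\<bar> \<le> e * integral {x..y} (\<lambda>t. \<bar>p t\<bar>)"
    using Vp p devV by (rule integral_mult_deviation_le)
  moreover have "U y * V y - U x * V x = U x * (V y - V x) + V y * (U y - U x)"
    by (simp add: algebra_simps)
  moreover have "U y - U x = integral {x..y} p" "V y - V x = integral {x..y} q"
    using U V assms by (auto intro: primitive_on_diff)
  moreover have "integral {x..y} (\<lambda>t. U t * q t + V t * p t)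
      = integral {x..y} (\<lambda>t. U t * q t) + integral {x..y} (\<lambda>t. V t * p t)"
    using Uq Vp by (rule integral_add)
  moreover have "integral {x..y} (\<lambda>t. \<bar>p t\<bar> + \<bar>q t\<bar>)
      = integral {x..y} (\<lambda>t. \<bar>p t\<bar>) + integral {x..y} (\<lambda>t. \<bar>q t\<bar>)"
    using p q by (intro integral_add) (auto simp: absolutely_integrable_on_def)
  ultimately show ?thesis by (smt (verit) distrib_left)
qed

lemma integration_by_parts_primitive_on:
  fixes p q U V :: "real \<Rightarrow> real"
  assumes "a \<le> b" and U: "primitive_on a b p U" and V: "primitive_on a b q V"
  shows "integral {a..b} (\<lambda>x. U x * q x + V x * p x) = U b * V b - U a * V a"
proof (rule integral_eq_of_local_estimate[where k = "\<lambda>x. \<bar>p x\<bar> + \<bar>q x\<bar>"])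
  have p: "p absolutely_integrable_on {a..b}" and q: "q absolutely_integrable_on {a..b}"
    using U V by (auto dest: primitive_onD)
  have Uc: "continuous_on {a..b} U" and Vc: "continuous_on {a..b} V"
    using U V by (auto intro: primitive_on_continuous)
  then show "(\<lambda>x. U x * q x + V x * p x) integrable_on {a..b}"
    using p q absolutely_integrable_continuous_mult
    by (auto intro: integrable_add simp: absolutely_integrable_on_def)
  show "(\<lambda>x. \<bar>p x\<bar> + \<bar>q x\<bar>) integrable_on {a..b}"
    using p q by (auto intro: integrable_add simp: absolutely_integrable_on_def)
  fix e z :: real assume "0 < e" "z \<in> {a..b}"
  then obtain d\<^sub>U d\<^sub>V where "0 < d\<^sub>U" "0 < d\<^sub>V"
    and dU: "\<And>t. t \<in> {a..b} \<Longrightarrow> \<bar>t - z\<bar> < d\<^sub>U \<Longrightarrow> \<bar>U t - U z\<bar> < e / 2"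
    and dV: "\<And>t. t \<in> {a..b} \<Longrightarrow> \<bar>t - z\<bar> < d\<^sub>V \<Longrightarrow> \<bar>V t - V z\<bar> < e / 2"
    using continuous_on_real_closeE[OF Uc] continuous_on_real_closeE[OF Vc] half_gt_zero by metis
  have "\<bar>U y * V y - U x * V x - integral {x..y} (\<lambda>t. U t * q t + V t * p t)\<bar>
      \<le> e * integral {x..y} (\<lambda>t. \<bar>p t\<bar> + \<bar>q t\<bar>)"
    if "a \<le> x" "x \<le> z" "z \<le> y" "y \<le> b" "y - x < min d\<^sub>U d\<^sub>V" for x y
  proof (rule integration_by_parts_estimate[OF U V])
    have near: "\<bar>U t - U z\<bar> < e / 2" "\<bar>V t - V z\<bar> < e / 2" if "t \<in> {x..y}" for t
      using dU[of t] dV[of t] that \<open>a \<le> x\<close> \<open>x \<le> z\<close> \<open>z \<le> y\<close> \<open>y \<le> b\<close> \<open>y - x < min d\<^sub>U d\<^sub>V\<close>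
      by auto
    have "x \<in> {x..y}" "y \<in> {x..y}" using that by auto
    then show "\<bar>U t - U x\<bar> \<le> e" "\<bar>V t - V y\<bar> \<le> e" if "t \<in> {x..y}" for t
      using near[OF that] near[of x] near[of y] by arith+
  qed (use that in auto)
  then show "\<exists>d>0. \<forall>x y. a \<le> x \<and> x \<le> z \<and> z \<le> y \<and> y \<le> b \<and> y - x < d \<longrightarrow>
      \<bar>U y * V y - U x * V x - integral {x..y} (\<lambda>t. U t * q t + V t * p t)\<bar>
        \<le> e * integral {x..y} (\<lambda>t. \<bar>p t\<bar> + \<bar>q t\<bar>)"
    using \<open>0 < d\<^sub>U\<close> \<open>0 < d\<^sub>V\<close> by (intro exI[of _ "min d\<^sub>U d\<^sub>V"]) auto
qed (fact)

lemma integral_mult_arctan_deriv_nonpos: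
  fixes f v u :: "real \<Rightarrow> real"
  assumes "a \<le> b" and v: "primitive_on a b f v" and u: "primitive_on a b v u"
    and "v a = 0" "v b = 0"
  shows "integral {a..b} (\<lambda>x. u x / (1 + (v x)\<^sup>2) * f x) \<le> 0"
proof -
  have "continuous_on UNIV (\<lambda>t::real. inverse (1 + t\<^sup>2))"
    by (intro continuous_intros) (simp add: add_nonneg_eq_0_iff)
  then have arctan: "primitive_on a b (\<lambda>x. inverse (1 + (v x)\<^sup>2) * f x) (\<lambda>x. arctan (v x))"
    by (rule primitive_on_comp[OF v DERIV_arctan])
  have uf: "(\<lambda>x. u x * (inverse (1 + (v x)\<^sup>2) * f x)) integrable_on {a..b}"
    using absolutely_integrable_continuous_mult[OF primitive_on_continuous[OF u] primitive_onD(1)[OF arctan]]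
    by (simp add: absolutely_integrable_on_def)
  have va: "(\<lambda>x. arctan (v x) * v x) integrable_on {a..b}"
    using primitive_on_continuous[OF v] by (intro integrable_continuous_interval continuous_intros)
  have "integral {a..b} (\<lambda>x. u x * (inverse (1 + (v x)\<^sup>2) * f x))
      + integral {a..b} (\<lambda>x. arctan (v x) * v x) = u b * arctan (v b) - u a * arctan (v a)"
    using integration_by_parts_primitive_on[OF \<open>a \<le> b\<close> u arctan] integral_add[OF uf va] by simp
  moreover have "0 \<le> integral {a..b} (\<lambda>x. arctan (v x) * v x)"
    using va by (rule integral_nonneg) (auto simp: zero_le_mult_iff)
  ultimately show ?thesis using \<open>v a = 0\<close> \<open>v b = 0\<close> by (simp add: divide_inverse mult.assoc)
qed

lemma quadratic_nonneg_imp_discriminant: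
  fixes P Q B :: real
  assumes "0 \<le> Q" and nonneg: "\<And>l. 0 \<le> l\<^sup>2 * Q - 2 * l * P + B"
  shows "P\<^sup>2 \<le> Q * B"
proof (cases "Q = 0")
  case True
  have "P = 0"
  proof (rule ccontr)
    assume "P \<noteq> 0"
    then show False using nonneg[of "(B + 1) / (2 * P)"] True by simp
  qed
  with True show ?thesis by simp
next
  case False
  with \<open>0 \<le> Q\<close> have "0 < Q" by simp
  have "0 \<le> (P / Q)\<^sup>2 * Q - 2 * (P / Q) * P + B" by (rule nonneg)
  also have "\<dots> = (Q * B - P\<^sup>2) / Q"
    using \<open>0 < Q\<close> by (simp add: field_simps power2_eq_square)
  finally show ?thesis using \<open>0 < Q\<close> by (simp add: zero_le_divide_iff)
qed

lemma integral_weighted_Cauchy_Schwarz: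
  fixes g w :: "'a::euclidean_space \<Rightarrow> real"
  assumes w: "\<And>x. x \<in> S \<Longrightarrow> 0 \<le> w x" and "w integrable_on S"
    and "(\<lambda>x. g x * w x) integrable_on S" and "(\<lambda>x. (g x)\<^sup>2 * w x) integrable_on S"
  shows "(integral S (\<lambda>x. g x * w x))\<^sup>2 \<le> integral S (\<lambda>x. (g x)\<^sup>2 * w x) * integral S w"
proof (rule quadratic_nonneg_imp_discriminant)
  show "0 \<le> integral S (\<lambda>x. (g x)\<^sup>2 * w x)"
    using assms by (intro integral_nonneg) auto
next
  fix l :: real
  have "((\<lambda>x. l\<^sup>2 * ((g x)\<^sup>2 * w x) - 2 * l * (g x * w x) + w x) has_integral
      l\<^sup>2 * integral S (\<lambda>x. (g x)\<^sup>2 * w x) - 2 * l * integral S (\<lambda>x. g x * w x) + integral S w) S"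
    using assms by (intro has_integral_add has_integral_diff has_integral_mult_right integrable_integral)
  moreover have "0 \<le> l\<^sup>2 * ((g x)\<^sup>2 * w x) - 2 * l * (g x * w x) + w x" if "x \<in> S" for x
  proof -
    have "l\<^sup>2 * ((g x)\<^sup>2 * w x) - 2 * l * (g x * w x) + w x = (l * g x - 1)\<^sup>2 * w x"
      by (simp add: power2_eq_square algebra_simps)
    with w[OF that] show ?thesis by simp
  qed
  ultimately show "0 \<le> l\<^sup>2 * integral S (\<lambda>x. (g x)\<^sup>2 * w x) - 2 * l * integral S (\<lambda>x. g x * w x) + integral S w"
    by (rule has_integral_nonneg)
qed

lemma integrable_continuous_quadratic:
  fixes c\<^sub>0 c\<^sub>1 c\<^sub>2 f :: "real \<Rightarrow> real"
  assumes "continuous_on {a..b} c\<^sub>0" "continuous_on {a..b} c\<^sub>1" "continuous_on {a..b} c\<^sub>2"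
    and f: "f absolutely_integrable_on {a..b}" and f2: "(\<lambda>x. (f x)\<^sup>2) integrable_on {a..b}"
  shows "(\<lambda>x. c\<^sub>0 x + c\<^sub>1 x * f x + c\<^sub>2 x * (f x)\<^sup>2) integrable_on {a..b}"
proof -
  have "(\<lambda>x. (f x)\<^sup>2) absolutely_integrable_on {a..b}"
    using f2 by (rule nonnegative_absolutely_integrable_1) simp
  with assms show ?thesis
    by (intro integrable_add integrable_continuous_interval set_lebesgue_integral_eq_integral(1)
        absolutely_integrable_continuous_mult)
qed

lemma H2_rep_primitive_on:
  assumes "H2_rep u u' u''"
  shows "primitive_on (-1) 1 u'' u'" and "primitive_on (-1) 1 u' u"
proof -
  show u'': "primitive_on (-1) 1 u'' u'"
    using assms unfolding H2_rep_def primitive_on_def by blast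
  have "u' absolutely_integrable_on {-1..1}"
    by (rule absolutely_integrable_continuous_real[OF primitive_on_continuous[OF u'']])
  then show "primitive_on (-1) 1 u' u"
    using assms unfolding H2_rep_def primitive_on_def by blast
qed

lemma H2_rep_continuous:
  assumes "H2_rep u u' u''"
  shows "continuous_on {-1..1} u" and "continuous_on {-1..1} u'"
  using H2_rep_primitive_on[OF assms] by (auto intro: primitive_on_continuous)

definition curvature_sum :: "(real \<Rightarrow> real) \<Rightarrow> (real \<Rightarrow> real) \<Rightarrow> (real \<Rightarrow> real) \<Rightarrow> real \<Rightarrow> real" where
  "curvature_sum u u' u'' x = 1 / (u x * sqrt (1 + (u' x)\<^sup>2)) - u'' x / sqrt (1 + (u' x)\<^sup>2) ^ 3"

definition area_density :: "(real \<Rightarrow> real) \<Rightarrow> (real \<Rightarrow> real) \<Rightarrow> real \<Rightarrow> real" where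
  "area_density u u' x = u x * sqrt (1 + (u' x)\<^sup>2)"

lemma willmore_eq:
  "willmore u u' u'' = pi / 2 * integral {-1..1} (\<lambda>x. (curvature_sum u u' u'' x)\<^sup>2 * area_density u u' x)"
  unfolding willmore_def curvature_sum_def area_density_def by (simp add: mult.assoc)

lemma area_eq: "area u u' = 2 * pi * integral {-1..1} (area_density u u')"
  unfolding area_def area_density_def ..

lemma curvature_sum_mult_area_density:
  assumes "u x \<noteq> 0"
  shows "curvature_sum u u' u'' x * area_density u u' x = 1 - u x / (1 + (u' x)\<^sup>2) * u'' x"
proof -
  define s where "s = sqrt (1 + (u' x)\<^sup>2)"
  have "0 < s" "s\<^sup>2 = 1 + (u' x)\<^sup>2" unfolding s_def by (simp_all add: add_pos_nonneg)
  have "curvature_sum u u' u'' x * area_density u u' x = 1 - u x * u'' x / s\<^sup>2"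
    unfolding curvature_sum_def area_density_def s_def[symmetric]
    using assms \<open>0 < s\<close> by (simp add: field_simps power2_eq_square power3_eq_cube)
  with \<open>s\<^sup>2 = 1 + (u' x)\<^sup>2\<close> show ?thesis by simp
qed

lemma area_density_pos:
  assumes "0 < u x"
  shows "0 < area_density u u' x"
  using assms by (simp add: area_density_def add_pos_nonneg)

lemma continuous_on_area_density:
  assumes "H2_rep u u' u''"
  shows "continuous_on {-1..1} (area_density u u')"
  unfolding area_density_def
  using H2_rep_continuous[OF assms] by (intro continuous_intros)

lemma area_nonneg:
  assumes H2: "H2_rep u u' u''" and pos: "\<And>x. x \<in> {-1..1} \<Longrightarrow> 0 < u x"
  shows "0 \<le> area u u'"
proof -
  have "0 \<le> integral {-1..1} (area_density u u')"
    using continuous_on_area_density[OF H2] pos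
    by (intro integral_nonneg integrable_continuous_interval less_imp_le area_density_pos)
  then show ?thesis unfolding area_eq by simp
qed

lemma has_integral_curvature_sum_mult_area_density:
  assumes H2: "H2_rep u u' u''" and pos: "\<And>x. x \<in> {-1..1} \<Longrightarrow> 0 < u x"
  shows "((\<lambda>x. curvature_sum u u' u'' x * area_density u u' x) has_integral
    2 - integral {-1..1} (\<lambda>x. u x / (1 + (u' x)\<^sup>2) * u'' x)) {-1..1}"
proof -
  have c: "continuous_on {-1..1} (\<lambda>x. u x / (1 + (u' x)\<^sup>2))"
    by (intro continuous_intros H2_rep_continuous[OF H2]) (simp add: add_nonneg_eq_0_iff)
  have "(\<lambda>x. u x / (1 + (u' x)\<^sup>2) * u'' x) integrable_on {-1..1}"
    using absolutely_integrable_continuous_mult[OF c primitive_onD(1)[OF H2_rep_primitive_on(1)[OF H2]]]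
    by (simp add: absolutely_integrable_on_def)
  from has_integral_diff[OF has_integral_const_real[of 1] integrable_integral[OF this]]
  have "((\<lambda>x. 1 - u x / (1 + (u' x)\<^sup>2) * u'' x) has_integral
      2 - integral {-1..1} (\<lambda>x. u x / (1 + (u' x)\<^sup>2) * u'' x)) {-1..1}"
    by simp
  moreover have "1 - u x / (1 + (u' x)\<^sup>2) * u'' x = curvature_sum u u' u'' x * area_density u u' x"
    if "x \<in> {-1..1}" for x
    using pos[OF that] by (simp add: curvature_sum_mult_area_density)
  ultimately show ?thesis by (rule has_integral_eq[rotated])
qed

lemma integrable_curvature_sum_sq_mult_area_density:
  assumes H2: "H2_rep u u' u''" and pos: "\<And>x. x \<in> {-1..1} \<Longrightarrow> 0 < u x"
  shows "(\<lambda>x. (curvature_sum u u' u'' x)\<^sup>2 * area_density u u' x) integrable_on {-1..1}"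
proof -
  let ?S = "{-1..1::real}"
  define w where "w = area_density u u'"
  define g where "g x = u x / (1 + (u' x)\<^sup>2)" for x
  have w_nz: "w x \<noteq> 0" if "x \<in> ?S" for x
    using pos[OF that] unfolding w_def by (intro less_imp_neq[symmetric] area_density_pos)
  have wc: "continuous_on ?S w" unfolding w_def by (rule continuous_on_area_density[OF H2])
  have gc: "continuous_on ?S g"
    unfolding g_def
    by (intro continuous_intros H2_rep_continuous[OF H2]) (simp add: add_nonneg_eq_0_iff)
  have c\<^sub>0: "continuous_on ?S (\<lambda>x. 1 / w x)"
    by (intro continuous_intros wc) (simp add: w_nz)
  have c\<^sub>1: "continuous_on ?S (\<lambda>x. - 2 * g x / w x)"
    by (intro continuous_intros wc gc) (simp add: w_nz)
  have c\<^sub>2: "continuous_on ?S (\<lambda>x. (g x)\<^sup>2 / w x)"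
    by (intro continuous_intros wc gc) (simp add: w_nz)
  have "(curvature_sum u u' u'' x)\<^sup>2 * w x
      = 1 / w x + (- 2 * g x / w x) * u'' x + ((g x)\<^sup>2 / w x) * (u'' x)\<^sup>2" if "x \<in> ?S" for x
  proof -
    have "(curvature_sum u u' u'' x)\<^sup>2 * w x = (curvature_sum u u' u'' x * w x)\<^sup>2 / w x"
      using w_nz[OF that] by (simp add: power2_eq_square)
    also have "\<dots> = (1 - g x * u'' x)\<^sup>2 / w x"
      using pos[OF that] by (simp add: w_def g_def curvature_sum_mult_area_density)
    also have "\<dots> = 1 / w x + (- 2 * g x / w x) * u'' x + ((g x)\<^sup>2 / w x) * (u'' x)\<^sup>2"
      using w_nz[OF that] by (simp add: power2_eq_square field_simps)
    finally show ?thesis .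
  qed
  then have "(\<lambda>x. (curvature_sum u u' u'' x)\<^sup>2 * w x) integrable_on ?S \<longleftrightarrow>
      (\<lambda>x. 1 / w x + (- 2 * g x / w x) * u'' x + ((g x)\<^sup>2 / w x) * (u'' x)\<^sup>2) integrable_on ?S"
    by (rule integrable_cong)
  moreover have "(\<lambda>x. (u'' x)\<^sup>2) integrable_on ?S"
    using H2 by (simp add: H2_rep_def)
  then have "(\<lambda>x. 1 / w x + (- 2 * g x / w x) * u'' x + ((g x)\<^sup>2 / w x) * (u'' x)\<^sup>2) integrable_on ?S"
    by (rule integrable_continuous_quadratic[OF c\<^sub>0 c\<^sub>1 c\<^sub>2 primitive_onD(1)[OF H2_rep_primitive_on(1)[OF H2]]])
  ultimately show ?thesis unfolding w_def by blast
qed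

lemma willmore_mult_area_ge:
  assumes H2: "H2_rep u u' u''" and pos: "\<And>x. x \<in> {-1..1} \<Longrightarrow> 0 < u x"
    and "u' (-1) = 0" "u' 1 = 0"
  shows "4 * pi\<^sup>2 \<le> willmore u u' u'' * area u u'"
proof -
  let ?S = "{-1..1::real}" and ?H = "curvature_sum u u' u''" and ?w = "area_density u u'"
  have "integral ?S (\<lambda>x. u x / (1 + (u' x)\<^sup>2) * u'' x) \<le> 0"
    using integral_mult_arctan_deriv_nonpos[OF _ H2_rep_primitive_on[OF H2] assms(3,4)] by simp
  then have "2 \<le> integral ?S (\<lambda>x. ?H x * ?w x)"
    using has_integral_curvature_sum_mult_area_density[OF H2 pos] by (simp add: integral_unique)
  then have "2\<^sup>2 \<le> (integral ?S (\<lambda>x. ?H x * ?w x))\<^sup>2"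
    by (rule power_mono) simp
  also have "\<dots> \<le> integral ?S (\<lambda>x. (?H x)\<^sup>2 * ?w x) * integral ?S ?w"
  proof (rule integral_weighted_Cauchy_Schwarz)
    show "0 \<le> ?w x" if "x \<in> ?S" for x
      using pos[OF that] by (intro less_imp_le area_density_pos)
    show "?w integrable_on ?S"
      by (rule integrable_continuous_interval[OF continuous_on_area_density[OF H2]])
    show "(\<lambda>x. ?H x * ?w x) integrable_on ?S"
      using has_integral_curvature_sum_mult_area_density[OF H2 pos] by blast
    show "(\<lambda>x. (?H x)\<^sup>2 * ?w x) integrable_on ?S"
      by (rule integrable_curvature_sum_sq_mult_area_density[OF H2 pos])
  qed
  finally have "pi\<^sup>2 * 4 \<le> pi\<^sup>2 * (integral ?S (\<lambda>x. (?H x)\<^sup>2 * ?w x) * integral ?S ?w)"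
    by (intro mult_left_mono) simp_all
  also have "\<dots> = willmore u u' u'' * area u u'"
    unfolding willmore_eq area_eq by (simp add: power2_eq_square)
  finally show ?thesis by simp
qed

lemma sum_bounds_of_mult_ge:
  fixes W A \<epsilon> m :: real
  assumes "0 < m" "m \<le> W * A" "0 \<le> A" "0 \<le> \<epsilon>"
  shows "2 * sqrt (\<epsilon> * m) \<le> W + \<epsilon> * A"
    and "W \<le> (W + \<epsilon> * A + sqrt ((W + \<epsilon> * A)\<^sup>2 - 4 * \<epsilon> * m)) / 2"
proof -
  have "0 < W * A" using assms by linarith
  with \<open>0 \<le> A\<close> have "0 < W" by (simp add: zero_less_mult_iff)
  have "(W + \<epsilon> * A)\<^sup>2 - (W - \<epsilon> * A)\<^sup>2 = 4 * \<epsilon> * (W * A)"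
    by (simp add: power2_eq_square algebra_simps)
  moreover have "4 * \<epsilon> * m \<le> 4 * \<epsilon> * (W * A)"
    using assms by (intro mult_left_mono) auto
  ultimately have square: "(W - \<epsilon> * A)\<^sup>2 \<le> (W + \<epsilon> * A)\<^sup>2 - 4 * \<epsilon> * m"
    by linarith
  have "(2 * sqrt (\<epsilon> * m))\<^sup>2 = 4 * \<epsilon> * m"
    using assms by (simp add: power_mult_distrib)
  also have "\<dots> \<le> (W + \<epsilon> * A)\<^sup>2"
    using square zero_le_power2[of "W - \<epsilon> * A"] by linarith
  finally show "2 * sqrt (\<epsilon> * m) \<le> W + \<epsilon> * A"
    by (rule power2_le_imp_le) (use \<open>0 < W\<close> assms in simp)
  have "W - \<epsilon> * A \<le> sqrt ((W + \<epsilon> * A)\<^sup>2 - 4 * \<epsilon> * m)"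
    using real_sqrt_le_mono[OF square] by simp
  then show "W \<le> (W + \<epsilon> * A + sqrt ((W + \<epsilon> * A)\<^sup>2 - 4 * \<epsilon> * m)) / 2"
    by simp
qed

theorem corollary3p2:
  fixes \<epsilon> :: real and u u' u'' :: "real \<Rightarrow> real"
  assumes "\<epsilon> \<ge> 0"
    and "H2_rep u u' u''"
    and "\<forall>x\<in>{-1..1}. u (-x) = u x"
    and "\<forall>x\<in>{-1..1}. u x > 0"
    and "u' (-1) = 0" and "u' 1 = 0"
  shows "helfrich \<epsilon> u u' u'' \<ge> 4 * pi * sqrt \<epsilon>
         \<and> willmore u u' u'' \<le>
             (helfrich \<epsilon> u u' u'' + sqrt ((helfrich \<epsilon> u u' u'')\<^sup>2 - 16 * pi\<^sup>2 * \<epsilon>)) / 2"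
proof -
  have "0 \<le> area u u'"
    using assms by (intro area_nonneg) auto
  moreover have "4 * pi\<^sup>2 \<le> willmore u u' u'' * area u u'"
    using assms by (intro willmore_mult_area_ge) auto
  ultimately have bounds: "2 * sqrt (\<epsilon> * (4 * pi\<^sup>2)) \<le> helfrich \<epsilon> u u' u''"
    "willmore u u' u'' \<le>
       (helfrich \<epsilon> u u' u'' + sqrt ((helfrich \<epsilon> u u' u'')\<^sup>2 - 4 * \<epsilon> * (4 * pi\<^sup>2))) / 2"
    using sum_bounds_of_mult_ge[of "4 * pi\<^sup>2", OF _ _ _ \<open>\<epsilon> \<ge> 0\<close>] unfolding helfrich_def by auto
  have "2 * sqrt (\<epsilon> * (4 * pi\<^sup>2)) = 4 * pi * sqrt \<epsilon>"
    by (simp add: real_sqrt_mult)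
  with bounds show ?thesis by (simp add: algebra_simps)
qed

end
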